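(* Let $\nabla$ be an ES basic fusion operator with representing basic assignment $\Phi\mapsto\succeq_\Phi$. The following are equivalent: (i) $\nabla$ satisfies (ESF-D); (ii) for every society $N$ there is $d_N\in N$ such that for every $N$-profile $\Phi$ and every $E\in\mathcal E$ with $|[\![B(E)]\!]|\le 2$, $B(\nabla(\Phi,E))\vdash B(\nabla(E_{d_N},E))$; (iii) for every society $N$ there is $d_N\in N$ such that for every $N$-profile $\Phi$ and all interpretations $w,w'$, if $w\succ_{E_{d_N}}w'$ then $w\succ_\Phi w'$.
   Context: Setting: epistemic space $(\mathcal E,B,\mathcal L_{\mathcal P})$ ($\mathcal E$ nonempty, $B:\mathcal E\to$ propositional formulas over finite $\mathcal P$, image modulo equivalence exactly the consistent formulas; $\mathcal W_{\mathcal P}$ valuations, $[\![\phi]\!]$ models); agents: well-ordered set $\mathcal S$; society: nonempty finite $N\subseteq\mathcal S$; $N$-profile $\Phi:N\to\mathcal E$, $E_i=\Phi(i)$, identified with $E_i$ if $N=\{i\}$; profiles on $\{i_1<\dots<i_n\}$, $\{j_1<\dots<j_m\}$ equivalent if $n=m$ and entries coincide position-wise. ES basic fusion operator: a map $\nabla(\Phi,E)\in\mathcal E$ with (ESF1) $B(\nabla(\Phi,E))\vdash B(E)$; (ESF2) equivalent profiles and $B(E)\equiv B(E')$ give equivalent $B(\nabla)$; (ESF3) if $B(E)\equiv B(E')\wedge B(E'')$ then $B(\nabla(\Phi,E'))\wedge B(E'')\vdash B(\nabla(\Phi,E))$; (ESF4) if moreover $B(\nabla(\Phi,E'))\wedge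 B(E'')\nvdash\bot$ then $B(\nabla(\Phi,E))\vdash B(\nabla(\Phi,E'))\wedge B(E'')$. Representing basic assignment: the unique $\Phi\mapsto\succeq_\Phi$ (total preorders on $\mathcal W_{\mathcal P}$, $\succ$ strict part, equal on equivalent profiles) with $[\![B(\nabla(\Phi,E))]\!]=\max([\![B(E)]\!],\succeq_\Phi)$, $\max(C,\succeq)=\{c\in C:c\succeq x\ \forall x\in C\}$. (ESF-D): for every society $N$ there exists $d_N\in N$ such that for every $N$-profile $\Phi$ and every $E$, $B(\nabla(\Phi,E))\vdash B(\nabla(E_{d_N},E))$. *)

theory Defs
  imports Main
begin

datatype 'p fm = FAtom 'p | FBot | FNeg "'p fm" | FAnd "'p fm" "'p fm"
  | FOr "'p fm" "'p fm" | FImp "'p fm" "'p fm"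

fun sat :: "'p set \<Rightarrow> 'p fm \<Rightarrow> bool" where
  "sat v (FAtom p) = (p \<in> v)"
| "sat v FBot = False"
| "sat v (FNeg f) = (\<not> sat v f)"
| "sat v (FAnd f g) = (sat v f \<and> sat v g)"
| "sat v (FOr f g) = (sat v f \<or> sat v g)"
| "sat v (FImp f g) = (sat v f \<longrightarrow> sat v g)"

definition models :: "'p fm \<Rightarrow> 'p set set" where
  "models f = {v. sat v f}"

definition entails :: "'p fm \<Rightarrow> 'p fm \<Rightarrow> bool" where
  "entails f g = (\<forall>v. sat v f \<longrightarrow> sat v g)"

definition fequiv :: "'p fm \<Rightarrow> 'p fm \<Rightarrow> bool" where
  "fequiv f g = (entails f g \<and> entails g f)"

definition consistent :: "'p fm \<Rightarrow> bool" where
  "consistent f = (\<not> entails f FBot)"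

definition epistemic_space :: "('e \<Rightarrow> 'p fm) \<Rightarrow> bool" where
  "epistemic_space B =
     ((\<forall>E. consistent (B E)) \<and> (\<forall>f. consistent f \<longrightarrow> (\<exists>E. fequiv (B E) f)))"

text \<open>Agents: the well-ordered type 's. A society is a nonempty finite set of agents.
  An N-profile is represented by a function 's \<Rightarrow> 'e whose values outside N are irrelevant.\<close>
definition society :: "'s set \<Rightarrow> bool" where
  "society N = (finite N \<and> N \<noteq> {})"

definition prof_equiv :: "'s::linorder set \<Rightarrow> ('s \<Rightarrow> 'e) \<Rightarrow> 's set \<Rightarrow> ('s \<Rightarrow> 'e) \<Rightarrow> bool" where
  "prof_equiv N \<Phi> M \<Psi> = (map \<Phi> (sorted_list_of_set N) = map \<Psi> (sorted_list_of_set M))"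

definition es_basic_fusion ::
  "('e \<Rightarrow> 'p fm) \<Rightarrow> ('s::wellorder set \<Rightarrow> ('s \<Rightarrow> 'e) \<Rightarrow> 'e \<Rightarrow> 'e) \<Rightarrow> bool" where
  "es_basic_fusion B nabla =
    ((\<forall>N \<Phi> E. society N \<longrightarrow> entails (B (nabla N \<Phi> E)) (B E)) \<and>
     (\<forall>N \<Phi> M \<Psi> E E'. society N \<longrightarrow> society M \<longrightarrow> prof_equiv N \<Phi> M \<Psi> \<longrightarrow>
        fequiv (B E) (B E') \<longrightarrow> fequiv (B (nabla N \<Phi> E)) (B (nabla M \<Psi> E'))) \<and>
     (\<forall>N \<Phi> E E' E''. society N \<longrightarrow> fequiv (B E) (FAnd (B E') (B E'')) \<longrightarrow>
        entails (FAnd (B (nabla N \<Phi> E')) (B E'')) (B (nabla N \<Phi> E))) \<and>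
     (\<forall>N \<Phi> E E' E''. society N \<longrightarrow> fequiv (B E) (FAnd (B E') (B E'')) \<longrightarrow>
        consistent (FAnd (B (nabla N \<Phi> E')) (B E'')) \<longrightarrow>
        entails (B (nabla N \<Phi> E)) (FAnd (B (nabla N \<Phi> E')) (B E''))))"

definition total_preorder :: "('w \<Rightarrow> 'w \<Rightarrow> bool) \<Rightarrow> bool" where
  "total_preorder R = ((\<forall>x y. R x y \<or> R y x) \<and> (\<forall>x y z. R x y \<longrightarrow> R y z \<longrightarrow> R x z))"

definition strict :: "('w \<Rightarrow> 'w \<Rightarrow> bool) \<Rightarrow> 'w \<Rightarrow> 'w \<Rightarrow> bool" where
  "strict R x y = (R x y \<and> \<not> R y x)"

definition maxel :: "'w set \<Rightarrow> ('w \<Rightarrow> 'w \<Rightarrow> bool) \<Rightarrow> 'w set" where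
  "maxel C R = {c \<in> C. \<forall>x \<in> C. R c x}"

definition represents ::
  "('e \<Rightarrow> 'p fm) \<Rightarrow> ('s::wellorder set \<Rightarrow> ('s \<Rightarrow> 'e) \<Rightarrow> 'e \<Rightarrow> 'e)
   \<Rightarrow> ('s set \<Rightarrow> ('s \<Rightarrow> 'e) \<Rightarrow> 'p set \<Rightarrow> 'p set \<Rightarrow> bool) \<Rightarrow> bool" where
  "represents B nabla pre =
    ((\<forall>N \<Phi>. society N \<longrightarrow> total_preorder (pre N \<Phi>)) \<and>
     (\<forall>N \<Phi> M \<Psi>. society N \<longrightarrow> society M \<longrightarrow> prof_equiv N \<Phi> M \<Psi> \<longrightarrow> pre N \<Phi> = pre M \<Psi>) \<and>
     (\<forall>N \<Phi> E. society N \<longrightarrow>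
        models (B (nabla N \<Phi> E)) = maxel (models (B E)) (pre N \<Phi>)))"

end

theory Submission
  imports Defs
begin

text \<open>Everything happens in the preorders: \<open>\<nabla>(\<Phi>,E)\<close> selects the maximal models of \<open>B(E)\<close>,
  so \<open>\<nabla>(\<Phi>,E) \<turnstile> \<nabla>(E\<^sub>d,E)\<close> for all \<open>E\<close> says that maximality for \<open>\<succeq>\<^sub>\<Phi>\<close> implies maximality
  for \<open>\<succeq>\<^sub>E\<^sub>d\<close> on every set of interpretations, which for total preorders is exactly
  \<open>\<succ>\<^sub>E\<^sub>d \<subseteq> \<succ>\<^sub>\<Phi>\<close>. A strict preference \<open>w \<succ> w'\<close> is already detected on the pair \<open>{w, w'}\<close>,
  and every nonempty set of interpretations is the model set of some epistemic state,
  so testing states with at most two models suffices.\<close>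

fun char_fm :: "'p list \<Rightarrow> 'p set \<Rightarrow> 'p fm" where
  "char_fm [] w = FImp FBot FBot"
| "char_fm (p # ps) w = FAnd (if p \<in> w then FAtom p else FNeg (FAtom p)) (char_fm ps w)"

lemma sat_char_fm: "sat v (char_fm ps w) \<longleftrightarrow> (\<forall>p\<in>set ps. p \<in> v \<longleftrightarrow> p \<in> w)"
  by (induction ps) auto

definition fm_of_valuations :: "'p list \<Rightarrow> 'p set list \<Rightarrow> 'p fm" where
  "fm_of_valuations ps ws = foldr (\<lambda>w f. FOr (char_fm ps w) f) ws FBot"

lemma models_fm_of_valuations:
  assumes "set ps = UNIV"
  shows "models (fm_of_valuations ps ws) = set ws"
proof -
  have "sat v (fm_of_valuations ps ws) \<longleftrightarrow> v \<in> set ws" for v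
    using assms by (induction ws) (auto simp: fm_of_valuations_def sat_char_fm)
  then show ?thesis
    unfolding models_def by auto
qed

lemma entails_iff_models_subset: "entails f g \<longleftrightarrow> models f \<subseteq> models g"
  unfolding entails_def models_def by auto

lemma epistemic_space_models_surj:
  fixes B :: "'e \<Rightarrow> ('p::finite) fm"
  assumes "epistemic_space B" and "W \<noteq> {}"
  shows "\<exists>E. models (B E) = W"
proof -
  obtain ps :: "'p list" where ps: "set ps = UNIV"
    using finite_list[OF finite[of "UNIV :: 'p set"]] by blast
  obtain ws where ws: "set ws = W"
    using finite_list[OF finite[of W]] by blast
  let ?f = "fm_of_valuations ps ws"
  have models_f: "models ?f = W"
    using models_fm_of_valuations[OF ps] ws by simp
  with \<open>W \<noteq> {}\<close> have "consistent ?f"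
    unfolding consistent_def entails_iff_models_subset by (auto simp: models_def)
  then obtain E where "fequiv (B E) ?f"
    using assms(1) unfolding epistemic_space_def by blast
  then show ?thesis
    using models_f unfolding fequiv_def entails_iff_models_subset by auto
qed

lemma maxel_mono_if_strict_subset:
  assumes "total_preorder S"
    and "\<And>x y. strict S x y \<Longrightarrow> strict R x y"
  shows "maxel C R \<subseteq> maxel C S"
proof
  fix c assume c: "c \<in> maxel C R"
  show "c \<in> maxel C S"
  proof (rule ccontr)
    assume "c \<notin> maxel C S"
    then obtain x where x: "x \<in> C" "\<not> S c x"
      using c unfolding maxel_def by auto
    then have "strict S x c"
      using assms(1) unfolding strict_def total_preorder_def by blast
    then have "strict R x c"
      by (rule assms(2))
    with c x show False
      unfolding maxel_def strict_def by auto
  qed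
qed

lemma strict_if_maxel_pair_subset:
  assumes "total_preorder R"
    and "maxel {x, y} R \<subseteq> maxel {x, y} S"
    and "strict S x y"
  shows "strict R x y"
proof -
  have "y \<notin> maxel {x, y} S"
    using assms(3) unfolding strict_def maxel_def by auto
  with assms(2) have "y \<notin> maxel {x, y} R"
    by blast
  moreover have "R y y"
    using assms(1) unfolding total_preorder_def by blast
  ultimately have "\<not> R y x"
    unfolding maxel_def by blast
  moreover from this have "R x y"
    using assms(1) unfolding total_preorder_def by blast
  ultimately show ?thesis
    unfolding strict_def by blast
qed

lemma represents_total_preorder:
  "represents B nabla pre \<Longrightarrow> society N \<Longrightarrow> total_preorder (pre N \<Phi>)"
  unfolding represents_def by blast

lemma represents_models:
  "represents B nabla pre \<Longrightarrow> society N \<Longrightarrow>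
     models (B (nabla N \<Phi> E)) = maxel (models (B E)) (pre N \<Phi>)"
  unfolding represents_def by blast

lemma fusion_entails_iff_maxel_subset:
  assumes "represents B nabla pre" and "society N" and "society M"
  shows "entails (B (nabla N \<Phi> E)) (B (nabla M \<Psi> E))
           \<longleftrightarrow> maxel (models (B E)) (pre N \<Phi>) \<subseteq> maxel (models (B E)) (pre M \<Psi>)"
  unfolding entails_iff_models_subset represents_models[OF assms(1,2)] represents_models[OF assms(1,3)] ..

lemma society_singleton: "society {d}"
  unfolding society_def by simp

lemma ex_dictator_mono:
  assumes "\<forall>N. society N \<longrightarrow> (\<exists>d\<in>N. P N d)"
    and "\<And>N d. society N \<Longrightarrow> P N d \<Longrightarrow> Q N d"
  shows "\<forall>N. society N \<longrightarrow> (\<exists>d\<in>N. Q N d)"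
  using assms by blast

lemma dictator_strict_if_pairs:
  fixes B :: "'e \<Rightarrow> ('p::finite) fm"
  assumes "epistemic_space B" and rep: "represents B nabla pre" and N: "society N"
    and pairs: "\<forall>\<Phi> E. card (models (B E)) \<le> 2 \<longrightarrow>
                  entails (B (nabla N \<Phi> E)) (B (nabla {d} \<Phi> E))"
    and st: "strict (pre {d} \<Phi>) w w'"
  shows "strict (pre N \<Phi>) w w'"
proof -
  obtain E where E: "models (B E) = {w, w'}"
    using epistemic_space_models_surj[OF assms(1), of "{w, w'}"] by auto
  have "card (models (B E)) \<le> 2"
    unfolding E by (simp add: card_insert_if)
  then have "entails (B (nabla N \<Phi> E)) (B (nabla {d} \<Phi> E))"
    by (rule pairs[rule_format])
  then have "maxel {w, w'} (pre N \<Phi>) \<subseteq> maxel {w, w'} (pre {d} \<Phi>)"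
    unfolding fusion_entails_iff_maxel_subset[OF rep N society_singleton] E .
  with represents_total_preorder[OF rep N] show ?thesis
    using st by (rule strict_if_maxel_pair_subset)
qed

lemma dictator_entails_if_strict:
  assumes rep: "represents B nabla pre" and N: "society N"
    and strict: "\<forall>\<Phi> w w'. strict (pre {d} \<Phi>) w w' \<longrightarrow> strict (pre N \<Phi>) w w'"
  shows "entails (B (nabla N \<Phi> E)) (B (nabla {d} \<Phi> E))"
proof -
  have "maxel (models (B E)) (pre N \<Phi>) \<subseteq> maxel (models (B E)) (pre {d} \<Phi>)"
    by (rule maxel_mono_if_strict_subset[OF represents_total_preorder[OF rep society_singleton]])
      (use strict in blast)
  then show ?thesis
    unfolding fusion_entails_iff_maxel_subset[OF rep N society_singleton] .
qed

theorem mainTheorem13: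
  fixes B :: "'e \<Rightarrow> ('p::finite) fm"
    and nabla :: "'s::wellorder set \<Rightarrow> ('s \<Rightarrow> 'e) \<Rightarrow> 'e \<Rightarrow> 'e"
    and pre :: "'s set \<Rightarrow> ('s \<Rightarrow> 'e) \<Rightarrow> 'p set \<Rightarrow> 'p set \<Rightarrow> bool"
  assumes "epistemic_space B"
    and "es_basic_fusion B nabla"
    and "represents B nabla pre"
  shows "((\<forall>N. society N \<longrightarrow> (\<exists>d\<in>N. \<forall>\<Phi> E.
              entails (B (nabla N \<Phi> E)) (B (nabla {d} \<Phi> E))))
          \<longleftrightarrow>
          (\<forall>N. society N \<longrightarrow> (\<exists>d\<in>N. \<forall>\<Phi> E. card (models (B E)) \<le> 2 \<longrightarrow>
              entails (B (nabla N \<Phi> E)) (B (nabla {d} \<Phi> E)))))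
       \<and> ((\<forall>N. society N \<longrightarrow> (\<exists>d\<in>N. \<forall>\<Phi> E.
              entails (B (nabla N \<Phi> E)) (B (nabla {d} \<Phi> E))))
          \<longleftrightarrow>
          (\<forall>N. society N \<longrightarrow> (\<exists>d\<in>N. \<forall>\<Phi> w w'.
              strict (pre {d} \<Phi>) w w' \<longrightarrow> strict (pre N \<Phi>) w w')))"
proof -
  have pairs_strict: "(\<forall>\<Phi> E. card (models (B E)) \<le> 2 \<longrightarrow>
                          entails (B (nabla N \<Phi> E)) (B (nabla {d} \<Phi> E)))
                      \<Longrightarrow> (\<forall>\<Phi> w w'. strict (pre {d} \<Phi>) w w' \<longrightarrow> strict (pre N \<Phi>) w w')"
    if "society N" for N d
    by (intro allI impI) (rule dictator_strict_if_pairs[OF assms(1,3) that])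
  have strict_all: "(\<forall>\<Phi> w w'. strict (pre {d} \<Phi>) w w' \<longrightarrow> strict (pre N \<Phi>) w w')
                    \<Longrightarrow> (\<forall>\<Phi> E. entails (B (nabla N \<Phi> E)) (B (nabla {d} \<Phi> E)))"
    if "society N" for N d
    by (intro allI) (rule dictator_entails_if_strict[OF assms(3) that])
  have all_pairs: "(\<forall>\<Phi> E. entails (B (nabla N \<Phi> E)) (B (nabla {d} \<Phi> E)))
                   \<Longrightarrow> (\<forall>\<Phi> E. card (models (B E)) \<le> 2 \<longrightarrow>
                          entails (B (nabla N \<Phi> E)) (B (nabla {d} \<Phi> E)))" for N d
    by simp
  show ?thesis
    apply (intro conjI iffI; elim ex_dictator_mono)
    subgoal by (rule all_pairs)
    subgoal by (rule strict_all, assumption, rule pairs_strict)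
    subgoal by (rule pairs_strict, assumption, rule all_pairs)
    subgoal by (rule strict_all)
    done
qed

end
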